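(* Let $k$ be a positive integer and $n_0,\ldots,n_{k-1}$ positive integers, with indices read modulo $k$. For each $j\in\{0,\ldots,k-1\}$ let $A^{(j)}$ be a real $n_j\times n_{j+1}$ matrix. Then every matrix in $\mathcal{Q}(A^{(0)})\mathcal{Q}(A^{(1)})\cdots\mathcal{Q}(A^{(k-1)})$ is a $P_0$-matrix if and only if the signed digraph $G_{A^{(0)}A^{(1)}\cdots A^{(k-1)}}$ is e-cycle-free.
   Context: Indices $j$ are taken modulo $k$. For a real matrix $M$, the qualitative class $\mathcal{Q}(M)$ is the set of real matrices $X$ of the same dimensions with $M_{ij}>0\Rightarrow X_{ij}>0$, $M_{ij}<0\Rightarrow X_{ij}<0$, $M_{ij}=0\Rightarrow X_{ij}=0$. The set $\mathcal{Q}(A^{(0)})\cdots\mathcal{Q}(A^{(k-1)})$ is $\{B^{(0)}B^{(1)}\cdots B^{(k-1)} : B^{(j)}\in\mathcal{Q}(A^{(j)})\}$. The signed digraph $G=G_{A^{(0)}\cdots A^{(k-1)}}$ has vertex set the disjoint union of sets $V_0,\ldots,V_{k-1}$ with $V_j=\{V_j^1,\ldots,V_j^{n_j}\}$; there is a directed edge from $V_j^r$ to $V_{j+1}^s$ iff $(A^{(j)})_{rs}\neq 0$, with sign equal to the sign of $(A^{(j)})_{rs}$; there are no other edges (for $k=1$, loops are allowed). Every directed cycle in $G$ has length a multiple of $k$. A directed cycle with $kr_1$ edges, of which $r_2$ are negative, is an e-cycle if $(-1)^{r_1+r_2}=1$ and an o-cycle otherwise; $G$ is e-cycle-free if it has no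 e-cycle. A $P_0$-matrix is a real square matrix all of whose principal minors are nonnegative. *)

theory Defs
  imports "Jordan_Normal_Form.Determinant" "Jordan_Normal_Form.DL_Submatrix"
begin

definition qual_class :: "real mat \<Rightarrow> real mat set" where
  "qual_class M = {X. dim_row X = dim_row M \<and> dim_col X = dim_col M \<and>
     (\<forall>i<dim_row M. \<forall>j<dim_col M. sgn (X $$ (i,j)) = sgn (M $$ (i,j)))}"

definition chain_prod :: "nat \<Rightarrow> nat \<Rightarrow> (nat \<Rightarrow> real mat) \<Rightarrow> real mat" where
  "chain_prod m k B = foldr (\<lambda>j P. B j * P) [0..<k] (1\<^sub>m m)"

(* The set Q(A 0) Q(A 1) ... Q(A (k-1)); n 0 is the number of columns of A (k-1) *)
definition qual_product :: "nat \<Rightarrow> (nat \<Rightarrow> nat) \<Rightarrow> (nat \<Rightarrow> real mat) \<Rightarrow> real mat set" where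
  "qual_product k n A = {chain_prod (n 0) k B | B. \<forall>j<k. B j \<in> qual_class (A j)}"

definition P0_matrix :: "real mat \<Rightarrow> bool" where
  "P0_matrix M \<longleftrightarrow> dim_row M = dim_col M \<and>
     (\<forall>I. I \<subseteq> {0..<dim_row M} \<longrightarrow> I \<noteq> {} \<longrightarrow> det (submatrix M I I) \<ge> 0)"

(* Signed digraph G_{A(0)...A(k-1)}: vertex V_j^r is (j, r) with j < k, r < n j *)
definition sd_vertex :: "nat \<Rightarrow> (nat \<Rightarrow> nat) \<Rightarrow> nat \<times> nat \<Rightarrow> bool" where
  "sd_vertex k n v \<longleftrightarrow> fst v < k \<and> snd v < n (fst v)"

definition sd_edge :: "nat \<Rightarrow> (nat \<Rightarrow> nat) \<Rightarrow> (nat \<Rightarrow> real mat) \<Rightarrow> nat \<times> nat \<Rightarrow> nat \<times> nat \<Rightarrow> bool" where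
  "sd_edge k n A v w \<longleftrightarrow> sd_vertex k n v \<and> sd_vertex k n w \<and>
     fst w = (fst v + 1) mod k \<and> A (fst v) $$ (snd v, snd w) \<noteq> 0"

definition sd_edge_sign :: "(nat \<Rightarrow> real mat) \<Rightarrow> nat \<times> nat \<Rightarrow> nat \<times> nat \<Rightarrow> real" where
  "sd_edge_sign A v w = sgn (A (fst v) $$ (snd v, snd w))"

(* A directed cycle given by its list of distinct vertices vs = [v_0, ..., v_{m-1}],
   with edges v_i -> v_{(i+1) mod m}; it has m edges (m = 1 is a loop). *)
definition sd_cycle :: "nat \<Rightarrow> (nat \<Rightarrow> nat) \<Rightarrow> (nat \<Rightarrow> real mat) \<Rightarrow> (nat \<times> nat) list \<Rightarrow> bool" where
  "sd_cycle k n A vs \<longleftrightarrow> vs \<noteq> [] \<and> distinct vs \<and>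
     (\<forall>i<length vs. sd_edge k n A (vs ! i) (vs ! ((i + 1) mod length vs)))"

definition sd_neg_edges :: "(nat \<Rightarrow> real mat) \<Rightarrow> (nat \<times> nat) list \<Rightarrow> nat" where
  "sd_neg_edges A vs = card {i. i < length vs \<and>
      sd_edge_sign A (vs ! i) (vs ! ((i + 1) mod length vs)) < 0}"

(* e-cycle: k*r1 edges, r2 of them negative, (-1)^(r1+r2) = 1 *)
definition sd_e_cycle :: "nat \<Rightarrow> (nat \<Rightarrow> nat) \<Rightarrow> (nat \<Rightarrow> real mat) \<Rightarrow> (nat \<times> nat) list \<Rightarrow> bool" where
  "sd_e_cycle k n A vs \<longleftrightarrow> sd_cycle k n A vs \<and>
     (-1::int) ^ (length vs div k + sd_neg_edges A vs) = 1"

definition e_cycle_free :: "nat \<Rightarrow> (nat \<Rightarrow> nat) \<Rightarrow> (nat \<Rightarrow> real mat) \<Rightarrow> bool" where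
  "e_cycle_free k n A \<longleftrightarrow> \<not> (\<exists>vs. sd_e_cycle k n A vs)"

end

theory Submission
  imports Defs
begin

text \<open>Multilinear expansion writes a principal minor of \<open>B\<^sub>0 \<cdots> B\<^sub>k\<^sub>-\<^sub>1\<close> on the rows
  \<open>I\<close> as a sum over families of injective maps \<open>H\<^sub>0 = id, H\<^sub>1, \<dots>, H\<^sub>k\<close>, i.e.\ over families of
  paths \<open>V\<^sub>0 \<rightarrow> V\<^sub>1 \<rightarrow> \<dots> \<rightarrow> V\<^sub>0\<close> in the signed digraph, one from each \<open>i \<in> I\<close>,
  whose endpoints \<open>H\<^sub>k\<close> permute \<open>I\<close>; the term is \<open>sign H\<^sub>k\<close> times the product of the
  entries along the paths. Each cycle of \<open>H\<^sub>k\<close> glues its paths into a cycle of the digraph, and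
  if all cycles of the digraph are o-cycles their signs exactly cancel \<open>sign H\<^sub>k\<close>, so every term
  is nonnegative. Conversely, for an e-cycle choose entries of modulus \<open>1\<close> on it and of
  modulus \<open>\<epsilon>\<close> elsewhere: the principal minor on the level-\<open>0\<close> vertices of the cycle is then
  \<open>-1 + O(\<epsilon>) < 0\<close>.\<close>

section \<open>Signs of permutations from their cycles\<close>

text \<open>For a permutation of \<open>I\<close> the minimal nonempty invariant subsets are exactly its cycles.\<close>

definition perm_cycle :: "('a \<Rightarrow> 'a) \<Rightarrow> 'a set \<Rightarrow> 'a set \<Rightarrow> bool" where
  "perm_cycle \<sigma> I Q \<longleftrightarrow> Q \<noteq> {} \<and> Q \<subseteq> I \<and> \<sigma> ` Q \<subseteq> Q \<and>
     (\<forall>Q'. Q' \<subseteq> Q \<longrightarrow> Q' \<noteq> {} \<longrightarrow> \<sigma> ` Q' \<subseteq> Q' \<longrightarrow> Q' = Q)"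

lemma perm_cycleD:
  assumes "perm_cycle \<sigma> I Q"
  shows "Q \<noteq> {}" "Q \<subseteq> I" "\<sigma> ` Q \<subseteq> Q"
    "\<And>Q'. Q' \<subseteq> Q \<Longrightarrow> Q' \<noteq> {} \<Longrightarrow> \<sigma> ` Q' \<subseteq> Q' \<Longrightarrow> Q' = Q"
  using assms unfolding perm_cycle_def by auto

lemma perm_cycle_fixpoint:
  assumes "perm_cycle \<sigma> I Q" "a \<in> Q" "\<sigma> a = a"
  shows "Q = {a}"
  using perm_cycleD(4)[OF assms(1), of "{a}"] assms(2,3) by auto

lemma perm_cycle_cong:
  assumes "perm_cycle \<tau> I Q" "\<And>y. y \<in> Q \<Longrightarrow> \<tau> y = \<sigma> y"
  shows "perm_cycle \<sigma> I Q"
proof -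
  have img: "\<sigma> ` X = \<tau> ` X" if "X \<subseteq> Q" for X
    using assms(2) that by (intro image_cong) auto
  show ?thesis
    using perm_cycleD[OF assms(1)] img unfolding perm_cycle_def by (metis order_refl)
qed

text \<open>Undoing the splitting of a cycle: \<open>\<tau>\<close> arises from \<open>\<sigma>\<close> by cutting \<open>a\<close> out of the
  cycle \<open>\<dots> \<mapsto> z \<mapsto> a \<mapsto> b \<mapsto> \<dots>\<close>.\<close>

lemma perm_cycle_insert:
  assumes inj: "inj \<sigma>" and a: "a \<in> I" and za: "\<sigma> z = a" and ab: "\<sigma> a = b" "a \<noteq> b"
    and \<tau>a: "\<tau> a = a" and \<tau>z: "\<tau> z = b" and \<tau>o: "\<And>y. y \<noteq> a \<Longrightarrow> y \<noteq> z \<Longrightarrow> \<tau> y = \<sigma> y"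
    and cyc: "perm_cycle \<tau> I Q" and zQ: "z \<in> Q"
  shows "perm_cycle \<sigma> I (insert a Q)"
proof -
  have \<sigma>_ne_a: "\<sigma> y \<noteq> a" if "y \<noteq> z" for y using that za inj by (metis injD)
  have "\<sigma> y \<in> insert a Q" if y: "y \<in> insert a Q" for y
  proof -
    consider "y = a" | "y = z" | "y \<in> Q" "y \<noteq> a" "y \<noteq> z" using y by auto
    then show ?thesis
    proof cases
      case 1 then show ?thesis using \<tau>z zQ perm_cycleD(3)[OF cyc] ab by auto
    next
      case 3 then show ?thesis using \<tau>o perm_cycleD(3)[OF cyc] by force
    qed (use za in simp)
  qed
  then have inv: "\<sigma> ` insert a Q \<subseteq> insert a Q" by blast
  have minimal: "Q' = insert a Q"
    if Q': "Q' \<subseteq> insert a Q" "Q' \<noteq> {}" "\<sigma> ` Q' \<subseteq> Q'" for Q'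
  proof (cases "a \<in> Q'")
    case True
    have bQ': "b \<in> Q'" using True Q'(3) ab by auto
    have "\<tau> y \<in> Q' - {a}" if "y \<in> Q' - {a}" for y
    proof (cases "y = z")
      case True then show ?thesis using \<tau>z bQ' ab by simp
    next
      case False then show ?thesis using that \<tau>o Q'(3) \<sigma>_ne_a by force
    qed
    then have "\<tau> ` (Q' - {a}) \<subseteq> Q' - {a}" by blast
    moreover have "Q' - {a} \<subseteq> Q" "Q' - {a} \<noteq> {}" using Q'(1) bQ' ab by auto
    ultimately have "Q' - {a} = Q" by (rule perm_cycleD(4)[OF cyc, rotated 2])
    then show ?thesis using True by auto
  next
    case False
    have zQ': "z \<notin> Q'" using False Q'(3) za by auto
    have "\<tau> y \<in> Q'" if "y \<in> Q'" for y
      using that Q'(3) \<tau>o[of y] False zQ' by (metis image_subset_iff)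
    moreover have "Q' \<subseteq> Q" using Q'(1) False by blast
    ultimately have "Q' = Q" using perm_cycleD(4)[OF cyc] Q'(2) by blast
    then show ?thesis using zQ zQ' by simp
  qed
  show ?thesis unfolding perm_cycle_def
    using perm_cycleD(2)[OF cyc] a inv minimal by blast
qed

lemma transpose_comp_cut:
  assumes "inj \<sigma>" "\<sigma> z = a" "\<sigma> a \<noteq> a"
  shows "(Transposition.transpose a (\<sigma> a) \<circ> \<sigma>) a = a"
    and "(Transposition.transpose a (\<sigma> a) \<circ> \<sigma>) z = \<sigma> a"
    and "y \<noteq> a \<Longrightarrow> y \<noteq> z \<Longrightarrow> (Transposition.transpose a (\<sigma> a) \<circ> \<sigma>) y = \<sigma> y"
  using assms by (auto simp: transpose_def dest: injD)

lemma perm_cycle_prod_cut: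
  fixes s :: "'a \<Rightarrow> 'b::comm_ring_1"
  assumes "finite I" "\<sigma> permutes I" "a \<in> I" "\<sigma> a \<noteq> a" "\<sigma> z = a"
    and hyp: "\<And>Q. perm_cycle \<sigma> I Q \<Longrightarrow> prod s Q = (-1) ^ (card Q - 1)"
    and cyc: "perm_cycle (Transposition.transpose a (\<sigma> a) \<circ> \<sigma>) I Q"
  shows "prod ((s(z := - s z * s a))(a := 1)) Q = (-1) ^ (card Q - 1)"
proof -
  define t where "t = (s(z := - s z * s a))(a := 1)"
  have inj: "inj \<sigma>" using assms(2) by (simp add: permutes_inj)
  note cut = transpose_comp_cut[OF inj assms(5,4)]
  have "z \<noteq> a" using assms(4,5) by auto
  have fQ: "finite Q" using perm_cycleD(2)[OF cyc] assms(1) by (rule finite_subset)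
  consider "a \<in> Q" | "a \<notin> Q" "z \<in> Q" | "a \<notin> Q" "z \<notin> Q" by blast
  then have "prod t Q = (-1) ^ (card Q - 1)"
  proof cases
    case 1
    then show ?thesis using perm_cycle_fixpoint[OF cyc _ cut(1)] t_def by simp
  next
    case 2
    have "perm_cycle \<sigma> I (insert a Q)"
      by (rule perm_cycle_insert[OF inj assms(3,5) refl assms(4)[symmetric] cut cyc 2(2)])
    from hyp[OF this] have "s a * prod s Q = (-1) ^ card Q" using 2 fQ by simp
    have "prod t Q = t z * prod t (Q - {z})" using 2 fQ by (simp add: prod.remove)
    also have "prod t (Q - {z}) = prod s (Q - {z})" using 2 unfolding t_def by (intro prod.cong) auto
    also have "t z * prod s (Q - {z}) = - (s a * (s z * prod s (Q - {z})))"
      unfolding t_def using \<open>z \<noteq> a\<close> by (simp add: algebra_simps)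
    also have "s z * prod s (Q - {z}) = prod s Q" using 2 fQ by (simp add: prod.remove)
    also have "- (s a * prod s Q) = (-1) ^ (card Q - 1)"
      using \<open>s a * prod s Q = (-1) ^ card Q\<close> 2 fQ by (cases "card Q") auto
    finally show ?thesis .
  next
    case 3
    then have "perm_cycle \<sigma> I Q" using perm_cycle_cong[OF cyc] cut(3) by metis
    moreover have "prod t Q = prod s Q" using 3 unfolding t_def by (intro prod.cong) auto
    ultimately show ?thesis using hyp by simp
  qed
  then show ?thesis unfolding t_def .
qed

lemma prod_two_remove:
  fixes f :: "'a \<Rightarrow> 'b::comm_monoid_mult"
  assumes "finite I" "a \<in> I" "z \<in> I" "a \<noteq> z"
  shows "prod f I = f a * f z * prod f (I - {a} - {z})"
proof -
  have "prod f I = f a * prod f (I - {a})" using assms by (simp add: prod.remove)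
  also have "prod f (I - {a}) = f z * prod f (I - {a} - {z})" using assms by (intro prod.remove) auto
  finally show ?thesis by (simp add: mult.assoc)
qed

lemma prod_cut_weight:
  fixes s :: "'a \<Rightarrow> 'b::comm_ring_1"
  assumes "finite I" "a \<in> I" "z \<in> I" "z \<noteq> a"
  shows "prod ((s(z := - s z * s a))(a := 1)) I = - prod s I"
proof -
  let ?t = "(s(z := - s z * s a))(a := 1)"
  have "prod ?t I = ?t a * ?t z * prod ?t (I - {a} - {z})"
    by (rule prod_two_remove) (use assms in auto)
  also have "prod ?t (I - {a} - {z}) = prod s (I - {a} - {z})"
    by (intro prod.cong) auto
  also have "?t a * ?t z = - (s a * s z)" using assms(4) by simp
  also have "- (s a * s z) * prod s (I - {a} - {z}) = - prod s I"
    using prod_two_remove[OF assms(1,2,3), of s] assms(4) by (metis minus_mult_left)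
  finally show ?thesis .
qed

text \<open>Equivalently \<open>sign \<sigma> = \<Prod>\<^sub>Q (-1)^(card Q - 1)\<close>. Induction on the support: composing
  with the transposition of \<open>a\<close> and \<open>\<sigma> a\<close> flips the sign and cuts \<open>a\<close> out of its cycle; moving
  the weight of \<open>a\<close> onto its predecessor \<open>z\<close> (with a sign flip) restores the hypothesis.\<close>

lemma sign_mult_prod_cycles_eq_1:
  fixes s :: "'a \<Rightarrow> 'b::comm_ring_1"
  assumes "finite I" "\<sigma> permutes I"
    and "\<And>Q. perm_cycle \<sigma> I Q \<Longrightarrow> prod s Q = (-1) ^ (card Q - 1)"
  shows "of_int (sign \<sigma>) * prod s I = 1"
  using assms(2,3)
proof (induction "card {x\<in>I. \<sigma> x \<noteq> x}" arbitrary: \<sigma> s rule: less_induct)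
  case less
  note perm = less.prems(1)
  show ?case
  proof (cases "\<exists>a\<in>I. \<sigma> a \<noteq> a")
    case False
    then have \<sigma>: "\<sigma> = id" using permutes_not_in[OF perm] by (metis eq_id_iff)
    have "s x = 1" if "x \<in> I" for x
      using less.prems(2)[of "{x}"] that unfolding perm_cycle_def \<sigma> by auto
    then show ?thesis using \<sigma> by simp
  next
    case True
    then obtain a where a: "a \<in> I" "\<sigma> a \<noteq> a" by blast
    define z where "z = inv_into UNIV \<sigma> a"
    define \<tau> where "\<tau> = Transposition.transpose a (\<sigma> a) \<circ> \<sigma>"
    define t where "t = (s(z := - s z * s a))(a := 1)"
    have zI: "z \<in> I" using a perm z_def by (simp add: permutes_inv permutes_in_image)
    have za: "\<sigma> z = a" using perm z_def by (simp add: permutes_inverses(1))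
    have "z \<noteq> a" using za a by auto
    note cut = transpose_comp_cut[OF permutes_inj[OF perm] za a(2), folded \<tau>_def]
    have \<tau>perm: "\<tau> permutes I" unfolding \<tau>_def
      by (intro permutes_compose perm permutes_swap_id a) (simp add: perm permutes_in_image a)
    have "{x\<in>I. \<tau> x \<noteq> x} \<subseteq> {x\<in>I. \<sigma> x \<noteq> x}"
      using cut(3) za a(2) \<open>z \<noteq> a\<close> by (smt (verit) mem_Collect_eq subsetI)
    then have "{x\<in>I. \<tau> x \<noteq> x} \<subset> {x\<in>I. \<sigma> x \<noteq> x}"
      using cut(1) a by blast
    then have support: "card {x\<in>I. \<tau> x \<noteq> x} < card {x\<in>I. \<sigma> x \<noteq> x}"
      using assms(1) by (intro psubset_card_mono) auto
    have "of_int (sign \<tau>) * prod t I = 1"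
      using less.hyps[OF support \<tau>perm] perm_cycle_prod_cut[OF assms(1) perm a za less.prems(2)]
      unfolding \<tau>_def t_def by blast
    moreover have "sign \<tau> = - sign \<sigma>"
      unfolding \<tau>_def using a
      by (simp add: sign_compose[OF permutation_swap_id permutes_imp_permutation[OF assms(1) perm]]
          sign_swap_id)
    moreover have "prod t I = - prod s I"
      unfolding t_def using prod_cut_weight[OF assms(1) a(1) zI \<open>z \<noteq> a\<close>] .
    ultimately show ?thesis by simp
  qed
qed

section \<open>Minors of matrix products\<close>

definition row_det :: "real mat \<Rightarrow> (nat \<Rightarrow> nat) \<Rightarrow> nat set \<Rightarrow> real" where
  "row_det M f I = (\<Sum>\<sigma>\<in>{\<sigma>. \<sigma> permutes I}. of_int (sign \<sigma>) * (\<Prod>i\<in>I. M $$ (f i, \<sigma> i)))"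

definition inj_maps :: "nat set \<Rightarrow> nat \<Rightarrow> (nat \<Rightarrow> nat) set" where
  "inj_maps I c = {g \<in> I \<rightarrow>\<^sub>E {0..<c}. inj_on g I}"

lemma finite_inj_maps: "finite I \<Longrightarrow> finite (inj_maps I c)"
  unfolding inj_maps_def by (rule finite_subset[OF _ finite_PiE[of I "\<lambda>_. {0..<c}"]]) auto

lemma bij_betw_pick: "finite I \<Longrightarrow> bij_betw (pick I) {0..<card I} I"
proof -
  assume fI: "finite I"
  have inj: "inj_on (pick I) {0..<card I}"
    by (rule inj_onI) (metis atLeastLessThan_iff linorder_neqE_nat pick_mono_le less_irrefl)
  have sub: "pick I ` {0..<card I} \<subseteq> I" using pick_in_set_le by auto
  have "card (pick I ` {0..<card I}) = card I" using card_image[OF inj] by simp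
  then show ?thesis using card_subset_eq[OF fI sub] inj unfolding bij_betw_def by simp
qed

text \<open>\<open>submatrix\<close> lists the rows and columns of \<open>I\<close> in increasing order, i.e.\ via \<open>pick I\<close>.\<close>

lemma det_principal_submatrix:
  assumes "M \<in> carrier_mat N N" "I \<subseteq> {0..<N}"
  shows "det (submatrix M I I) = row_det M (\<lambda>i. i) I"
proof -
  have fI: "finite I" using assms(2) finite_subset by blast
  define m where "m = card I"
  have cI: "{i. i < dim_row M \<and> i \<in> I} = I" "{i. i < dim_col M \<and> i \<in> I} = I" using assms by auto
  have "dim_row (submatrix M I I) = m" "dim_col (submatrix M I I) = m"
    by (simp_all only: dim_submatrix cI m_def)
  then have sc: "submatrix M I I \<in> carrier_mat m m" by blast
  define f where "f = pick I"
  have bij: "bij_betw f {0..<m} I" unfolding f_def m_def by (rule bij_betw_pick[OF fI])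
  have injf: "inj_on f {0..<m}" using bij bij_betw_def by blast
  define h where "h = map_permutation {0..<m} f"
  have hb: "bij_betw h {p. p permutes {0..<m}} {\<sigma>. \<sigma> permutes I}"
  proof -
    have "h = (\<lambda>\<pi> x. if x \<in> I then f (\<pi> (inv_into {0..<m} f x)) else x)"
      using bij unfolding h_def map_permutation_def restrict_id_def bij_betw_def by (auto simp: fun_eq_iff)
    then show ?thesis using bij_betw_permutations[OF bij] by simp
  qed
  have "det (submatrix M I I) =
      (\<Sum>p\<in>{p. p permutes {0..<m}}. of_int (sign p) * (\<Prod>a = 0..<m. M $$ (f a, f (p a))))"
    unfolding det_def'[OF sc]
  proof (intro sum.cong refl arg_cong2[where f="(*)"] prod.cong)
    fix p a assume p: "p \<in> {p. p permutes {0..<m}}" and a: "a \<in> {0..<m}"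
    have "p a < m" using p a by (auto simp: permutes_in_image)
    then show "submatrix M I I $$ (a, p a) = M $$ (f a, f (p a))"
      using a unfolding f_def by (subst submatrix_index) (auto simp: cI m_def)
  qed
  also have "\<dots> = (\<Sum>p\<in>{p. p permutes {0..<m}}. of_int (sign (h p)) * (\<Prod>i\<in>I. M $$ (i, h p i)))"
  proof (intro sum.cong refl)
    fix p assume p: "p \<in> {p. p permutes {0..<m}}"
    have "sign (h p) = sign p" unfolding h_def using p injf by (intro sign_map_permutation) auto
    moreover have "(\<Prod>i\<in>I. M $$ (i, h p i)) = (\<Prod>a = 0..<m. M $$ (f a, f (p a)))"
      using prod.reindex_bij_betw[OF bij, of "\<lambda>i. M $$ (i, h p i)"] injf
      unfolding h_def by (simp add: map_permutation_apply)
    ultimately show "of_int (sign p) * (\<Prod>a = 0..<m. M $$ (f a, f (p a))) =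
        of_int (sign (h p)) * (\<Prod>i\<in>I. M $$ (i, h p i))"
      by simp
  qed
  also have "\<dots> = row_det M (\<lambda>i. i) I"
    unfolding row_det_def by (rule sum.reindex_bij_betw[OF hb])
  finally show ?thesis .
qed

lemma row_det_cong: "(\<And>i. i \<in> I \<Longrightarrow> f i = g i) \<Longrightarrow> row_det M f I = row_det M g I"
  unfolding row_det_def by (intro sum.cong refl arg_cong2[where f="(*)"] prod.cong) auto

text \<open>Two equal rows: the transposition swapping them is a sign-reversing involution on the terms.\<close>

lemma row_det_eq_0_if_not_inj_on:
  assumes "finite I" "\<not> inj_on f I"
  shows "row_det M f I = 0"
proof -
  obtain x y where xy: "x \<in> I" "y \<in> I" "x \<noteq> y" "f x = f y" using assms(2) unfolding inj_on_def by blast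
  define \<tau> where "\<tau> = Transposition.transpose x y"
  have \<tau>: "\<tau> permutes I" unfolding \<tau>_def using xy by (simp add: permutes_swap_id)
  have f\<tau>: "f (\<tau> i) = f i" for i unfolding \<tau>_def using xy by (simp add: transpose_def)
  define T where "T \<sigma> = of_int (sign \<sigma>) * (\<Prod>i\<in>I. M $$ (f i, \<sigma> i))" for \<sigma>
  have "\<tau> \<circ> \<tau> = id" unfolding \<tau>_def by simp
  then have "sum T {\<sigma>. \<sigma> permutes I} = sum (\<lambda>\<sigma>. T (\<sigma> \<circ> \<tau>)) {\<sigma>. \<sigma> permutes I}"
    by (intro sum.reindex_bij_witness[where i="\<lambda>\<sigma>. \<sigma> \<circ> \<tau>" and j="\<lambda>\<sigma>. \<sigma> \<circ> \<tau>"])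
       (use \<tau> in \<open>auto simp: comp_assoc permutes_compose\<close>)
  also have "\<dots> = sum (\<lambda>\<sigma>. - T \<sigma>) {\<sigma>. \<sigma> permutes I}"
  proof (intro sum.cong refl)
    fix \<sigma> assume \<sigma>: "\<sigma> \<in> {\<sigma>. \<sigma> permutes I}"
    have "sign (\<sigma> \<circ> \<tau>) = - sign \<sigma>"
      using sign_compose[OF permutes_imp_permutation[OF assms(1)] permutes_imp_permutation[OF assms(1) \<tau>],
          of \<sigma>] \<sigma> xy
      unfolding \<tau>_def by (simp add: sign_swap_id)
    moreover have "(\<Prod>i\<in>I. M $$ (f i, \<sigma> (\<tau> i))) = (\<Prod>i\<in>I. M $$ (f i, \<sigma> i))"
      using prod.reindex_bij_betw[OF permutes_imp_bij[OF \<tau>], of "\<lambda>i. M $$ (f i, \<sigma> i)"] f\<tau> by simp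
    ultimately show "T (\<sigma> \<circ> \<tau>) = - T \<sigma>" unfolding T_def by simp
  qed
  finally show ?thesis unfolding row_det_def T_def[symmetric] by (simp add: sum_negf)
qed

lemma row_det_mult:
  assumes "A \<in> carrier_mat r c" "B \<in> carrier_mat c q" "I \<subseteq> {0..<q}" "\<And>i. i \<in> I \<Longrightarrow> f i < r"
  shows "row_det (A * B) f I = (\<Sum>g\<in>inj_maps I c. (\<Prod>i\<in>I. A $$ (f i, g i)) * row_det B g I)"
proof -
  have fI: "finite I" using assms(3) finite_subset by blast
  have "row_det (A * B) f I = (\<Sum>\<sigma>\<in>{\<sigma>. \<sigma> permutes I}. of_int (sign \<sigma>) *
      (\<Prod>i\<in>I. \<Sum>t\<in>{0..<c}. A $$ (f i, t) * B $$ (t, \<sigma> i)))"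
    unfolding row_det_def
  proof (intro sum.cong refl arg_cong2[where f="(*)"] prod.cong)
    fix \<sigma> i assume "\<sigma> \<in> {\<sigma>. \<sigma> permutes I}" "i \<in> I"
    then have "\<sigma> i \<in> I" by (simp add: permutes_in_image)
    then show "(A * B) $$ (f i, \<sigma> i) = (\<Sum>t\<in>{0..<c}. A $$ (f i, t) * B $$ (t, \<sigma> i))"
      using assms \<open>i \<in> I\<close> by (auto simp: scalar_prod_def)
  qed
  also have "\<dots> = (\<Sum>\<sigma>\<in>{\<sigma>. \<sigma> permutes I}. of_int (sign \<sigma>) *
      (\<Sum>g\<in>I \<rightarrow>\<^sub>E {0..<c}. \<Prod>i\<in>I. A $$ (f i, g i) * B $$ (g i, \<sigma> i)))"
    by (intro sum.cong refl arg_cong2[where f="(*)"] prod_sum_PiE[OF fI]) auto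
  also have "\<dots> = (\<Sum>\<sigma>\<in>{\<sigma>. \<sigma> permutes I}. \<Sum>g\<in>I \<rightarrow>\<^sub>E {0..<c}.
      (\<Prod>i\<in>I. A $$ (f i, g i)) * (of_int (sign \<sigma>) * (\<Prod>i\<in>I. B $$ (g i, \<sigma> i))))"
    by (simp add: sum_distrib_left prod.distrib algebra_simps)
  also have "\<dots> = (\<Sum>g\<in>I \<rightarrow>\<^sub>E {0..<c}. (\<Prod>i\<in>I. A $$ (f i, g i)) * row_det B g I)"
    unfolding row_det_def by (subst sum.swap) (simp add: sum_distrib_left)
  also have "\<dots> = (\<Sum>g\<in>inj_maps I c. (\<Prod>i\<in>I. A $$ (f i, g i)) * row_det B g I)"
    unfolding inj_maps_def
    by (rule sum.mono_neutral_right) (auto simp: row_det_eq_0_if_not_inj_on[OF fI] intro: finite_PiE fI)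
  finally show ?thesis .
qed

lemma row_det_one_mat:
  assumes "I \<subseteq> {0..<n}" "g \<in> inj_maps I n"
  shows "row_det (1\<^sub>m n) g I = (if g ` I = I then of_int (sign (restrict_id g I)) else 0)"
proof -
  have fI: "finite I" using assms(1) finite_subset by blast
  have g: "inj_on g I" "\<And>i. i \<in> I \<Longrightarrow> g i < n" using assms(2) unfolding inj_maps_def by auto
  have entry: "(\<Prod>i\<in>I. (1\<^sub>m n :: real mat) $$ (g i, \<sigma> i)) = (if \<forall>i\<in>I. g i = \<sigma> i then 1 else 0)"
    if "\<sigma> permutes I" for \<sigma>
  proof -
    have "(1\<^sub>m n :: real mat) $$ (g i, \<sigma> i) = (if g i = \<sigma> i then 1 else 0)" if "i \<in> I" for i
    proof -
      have "\<sigma> i \<in> I" using \<open>\<sigma> permutes I\<close> that by (simp add: permutes_in_image)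
      then show ?thesis using assms(1) g(2)[OF that] by auto
    qed
    then show ?thesis using fI by (simp add: prod_zero_iff cong: prod.cong)
  qed
  have "row_det (1\<^sub>m n) g I =
      (\<Sum>\<sigma>\<in>{\<sigma>. \<sigma> permutes I}. (if \<forall>i\<in>I. g i = \<sigma> i then of_int (sign \<sigma>) else 0))"
    unfolding row_det_def by (intro sum.cong refl) (simp add: entry)
  also have "\<dots> = (\<Sum>\<sigma>\<in>{\<sigma>. \<sigma> permutes I \<and> (\<forall>i\<in>I. g i = \<sigma> i)}. of_int (sign \<sigma>))"
    using sum.inter_filter[of "{\<sigma>. \<sigma> permutes I}" "\<lambda>\<sigma>. of_int (sign \<sigma>) :: real"
        "\<lambda>\<sigma>. \<forall>i\<in>I. g i = \<sigma> i", symmetric] finite_permutations[OF fI]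
    by (simp add: Collect_conj_eq)
  also have "{\<sigma>. \<sigma> permutes I \<and> (\<forall>i\<in>I. g i = \<sigma> i)} = (if g ` I = I then {restrict_id g I} else {})"
  proof (cases "g ` I = I")
    case True
    then have "bij_betw g I I" using g(1) by (simp add: bij_betw_def)
    moreover have "\<sigma> = restrict_id g I" if "\<sigma> permutes I" "\<forall>i\<in>I. g i = \<sigma> i" for \<sigma>
      using that permutes_not_in[OF that(1)] by (auto simp: fun_eq_iff restrict_id_def)
    ultimately show ?thesis using True permutes_restrict_id by fastforce
  next
    case False
    have "g ` I = I" if "\<sigma> permutes I" "\<forall>i\<in>I. g i = \<sigma> i" for \<sigma>
      using that permutes_image[OF that(1)] by (metis image_cong)
    then show ?thesis using False by auto
  qed
  finally show ?thesis by simp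
qed

lemma sum_PiE_insert:
  fixes F :: "('a \<Rightarrow> 'b) \<Rightarrow> 'c::comm_monoid_add"
  assumes "x \<notin> S" "finite S" "\<And>y. finite (T y)"
  shows "(\<Sum>G\<in>PiE (insert x S) T. F G) = (\<Sum>y\<in>T x. \<Sum>G\<in>PiE S T. F (G(x := y)))"
proof -
  have "(\<Sum>G\<in>PiE (insert x S) T. F G) = (\<Sum>p\<in>T x \<times> PiE S T. F ((\<lambda>(y, g). g(x := y)) p))"
    unfolding PiE_insert_eq using sum.reindex[OF inj_combinator[OF assms(1), of T], of F]
    by (simp add: comp_def)
  also have "\<dots> = (\<Sum>y\<in>T x. \<Sum>G\<in>PiE S T. F (G(x := y)))"
    by (subst sum.cartesian_product) (auto intro!: sum.cong)
  finally show ?thesis .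
qed

locale mat_chain =
  fixes k :: nat and N :: "nat \<Rightarrow> nat" and B :: "nat \<Rightarrow> real mat" and I :: "nat set"
  assumes B_carrier: "\<And>l. l < k \<Longrightarrow> B l \<in> carrier_mat (N l) (N (Suc l))"
    and I_subset: "I \<subseteq> {0..<N k}"
begin

definition tail_prod :: "nat \<Rightarrow> real mat" where
  "tail_prod j = foldr (\<lambda>l P. B l * P) [j..<k] (1\<^sub>m (N k))"

lemma tail_prod_k: "tail_prod k = 1\<^sub>m (N k)"
  unfolding tail_prod_def by simp

lemma tail_prod_step: "j < k \<Longrightarrow> tail_prod j = B j * tail_prod (Suc j)"
  unfolding tail_prod_def by (simp add: upt_conv_Cons)

lemma tail_prod_carrier: "j \<le> k \<Longrightarrow> tail_prod j \<in> carrier_mat (N j) (N k)"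
proof (induction "k - j" arbitrary: j)
  case 0
  then show ?case using tail_prod_k by simp
next
  case (Suc d)
  then have "j < k" "tail_prod (Suc j) \<in> carrier_mat (N (Suc j)) (N k)" by simp_all
  then show ?case using tail_prod_step B_carrier by (metis mult_carrier_mat)
qed

lemma finite_I: "finite I"
  using I_subset finite_subset by blast

text \<open>A term of the expansion of a minor of \<open>tail_prod j\<close>: \<open>H l i\<close> is the level-\<open>l\<close> vertex of
  the path indexed by \<open>i\<close>, and the paths must end in a permutation \<open>H k\<close> of \<open>I\<close>.\<close>

definition path_weight :: "nat \<Rightarrow> (nat \<Rightarrow> nat \<Rightarrow> nat) \<Rightarrow> real" where
  "path_weight j H = (if H k ` I = I then of_int (sign (restrict_id (H k) I)) else 0) *
     (\<Prod>i\<in>I. \<Prod>l\<in>{j..<k}. B l $$ (H l i, H (Suc l) i))"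

definition path_maps :: "nat \<Rightarrow> (nat \<Rightarrow> nat \<Rightarrow> nat) set" where
  "path_maps j = PiE {Suc j..k} (\<lambda>l. inj_maps I (N l))"

lemma path_weight_cong: "(\<And>l. l \<le> k \<Longrightarrow> H l = H' l) \<Longrightarrow> path_weight j H = path_weight j H'"
  unfolding path_weight_def by (intro arg_cong2[where f="(*)"] prod.cong refl) auto

lemma path_weight_fun_upd:
  assumes "j < k"
  shows "(\<Prod>i\<in>I. B j $$ (g i, g' i)) * path_weight (Suc j) (G(Suc j := g')) =
    path_weight j (G(Suc j := g', j := g))"
proof -
  let ?H = "G(Suc j := g', j := g)" and ?H' = "G(Suc j := g')"
  have "(\<Prod>l\<in>{j..<k}. B l $$ (?H l i, ?H (Suc l) i)) =
      B j $$ (g i, g' i) * (\<Prod>l\<in>{Suc j..<k}. B l $$ (?H' l i, ?H' (Suc l) i))" for i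
  proof -
    have "{j..<k} = insert j {Suc j..<k}" using assms by auto
    then have "(\<Prod>l\<in>{j..<k}. B l $$ (?H l i, ?H (Suc l) i)) =
        B j $$ (g i, g' i) * (\<Prod>l\<in>{Suc j..<k}. B l $$ (?H l i, ?H (Suc l) i))"
      by simp
    also have "(\<Prod>l\<in>{Suc j..<k}. B l $$ (?H l i, ?H (Suc l) i)) =
        (\<Prod>l\<in>{Suc j..<k}. B l $$ (?H' l i, ?H' (Suc l) i))"
      by (intro prod.cong refl) auto
    finally show ?thesis .
  qed
  moreover have "?H k = ?H' k" using assms by simp
  ultimately show ?thesis
    unfolding path_weight_def by (simp only: prod.distrib mult_ac)
qed

lemma row_det_tail_prod:
  "j \<le> k \<Longrightarrow> g \<in> inj_maps I (N j) \<Longrightarrow>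
    row_det (tail_prod j) g I = (\<Sum>G\<in>path_maps j. path_weight j (G(j := g)))"
proof (induction "k - j" arbitrary: j g)
  case 0
  then have jk: "j = k" by simp
  have "path_maps k = {\<lambda>_. undefined}" unfolding path_maps_def by simp
  then show ?case
    unfolding jk tail_prod_k path_weight_def using row_det_one_mat[OF I_subset] 0(3) jk by simp
next
  case (Suc d)
  then have jk: "j < k" by simp
  have IH: "row_det (tail_prod (Suc j)) g' I =
      (\<Sum>G\<in>path_maps (Suc j). path_weight (Suc j) (G(Suc j := g')))"
    if "g' \<in> inj_maps I (N (Suc j))" for g'
    using Suc.hyps(1)[of "Suc j" g'] Suc.hyps(2) jk that by simp
  have g: "\<And>i. i \<in> I \<Longrightarrow> g i < N j" using Suc.prems(2) unfolding inj_maps_def by auto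
  have "row_det (tail_prod j) g I =
      (\<Sum>g'\<in>inj_maps I (N (Suc j)). (\<Prod>i\<in>I. B j $$ (g i, g' i)) * row_det (tail_prod (Suc j)) g' I)"
    unfolding tail_prod_step[OF jk]
    by (rule row_det_mult[OF B_carrier[OF jk] tail_prod_carrier I_subset g]) (use jk in auto)
  also have "\<dots> = (\<Sum>g'\<in>inj_maps I (N (Suc j)). \<Sum>G\<in>path_maps (Suc j).
      path_weight j (G(Suc j := g', j := g)))"
    by (simp add: IH sum_distrib_left path_weight_fun_upd jk)
  also have "\<dots> = (\<Sum>G\<in>path_maps j. path_weight j (G(j := g)))"
  proof -
    have e: "{Suc j..k} = insert (Suc j) {Suc (Suc j)..k}" using jk by auto
    show ?thesis
      unfolding path_maps_def e by (subst sum_PiE_insert) (auto intro: finite_inj_maps finite_I)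
  qed
  finally show ?case .
qed

lemma principal_minor_chain_prod:
  assumes "N 0 = N k"
  shows "det (submatrix (chain_prod (N k) k B) I I) =
    (\<Sum>G\<in>path_maps 0. path_weight 0 (G(0 := (\<lambda>i\<in>I. i))))"
proof -
  have M: "chain_prod (N k) k B = tail_prod 0"
    unfolding chain_prod_def tail_prod_def ..
  have "(\<lambda>i\<in>I. i) \<in> inj_maps I (N 0)"
    using I_subset assms unfolding inj_maps_def by (auto simp: inj_on_def)
  moreover have "row_det (tail_prod 0) (\<lambda>i. i) I = row_det (tail_prod 0) (\<lambda>i\<in>I. i) I"
    by (rule row_det_cong) simp
  moreover have "tail_prod 0 \<in> carrier_mat (N k) (N k)"
    using tail_prod_carrier[of 0] assms by simp
  ultimately show ?thesis
    unfolding M using det_principal_submatrix[OF _ I_subset] row_det_tail_prod[of 0] by simp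
qed

lemma path_maps_upd_0:
  "G \<in> path_maps 0 \<Longrightarrow> g \<in> inj_maps I (N 0) \<Longrightarrow> l \<le> k \<Longrightarrow> (G(0 := g)) l \<in> inj_maps I (N l)"
  unfolding path_maps_def by (cases "l = 0") auto

end

section \<open>Cycles of the signed digraph\<close>

lemma perm_cycle_funpow:
  assumes "finite I" "\<sigma> permutes I" "perm_cycle \<sigma> I Q" "x \<in> Q"
  shows "(\<sigma> ^^ p) x \<in> Q" "(\<sigma> ^^ card Q) x = x"
    "inj_on (\<lambda>p. (\<sigma> ^^ p) x) {..<card Q}" "(\<lambda>p. (\<sigma> ^^ p) x) ` {..<card Q} = Q"
proof -
  define y where "y p = (\<sigma> ^^ p) x" for p
  have fQ: "finite Q" using perm_cycleD(2)[OF assms(3)] assms(1) finite_subset by blast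
  have yQ: "y p \<in> Q" for p
    unfolding y_def by (induction p) (use assms(4) perm_cycleD(3)[OF assms(3)] in auto)
  then show "(\<sigma> ^^ p) x \<in> Q" unfolding y_def .
  have "\<sigma> (y p) = y (Suc p)" for p unfolding y_def by simp
  then have "\<sigma> ` range y \<subseteq> range y" by auto
  moreover have "range y \<subseteq> Q" using yQ by auto
  ultimately have rng: "range y = Q" using perm_cycleD(4)[OF assms(3)] by simp
  have "\<not> inj_on y {..card Q}"
  proof
    assume "inj_on y {..card Q}"
    then have "card {..card Q} \<le> card Q" using card_inj_on_le fQ yQ by blast
    then show False by simp
  qed
  then obtain p q where pq: "p \<le> card Q" "q \<le> card Q" "p < q" "y p = y q"
    unfolding inj_on_def by (metis atMost_iff linorder_neqE_nat)
  define d where "d = q - p"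
  have "(\<sigma> ^^ p) ((\<sigma> ^^ d) x) = (\<sigma> ^^ (p + d)) x" by (simp add: funpow_add)
  also have "p + d = q" using pq d_def by simp
  finally have "(\<sigma> ^^ p) ((\<sigma> ^^ d) x) = (\<sigma> ^^ p) x" using pq unfolding y_def by simp
  then have yd: "(\<sigma> ^^ d) x = x"
    using inj_fn[OF permutes_inj[OF assms(2)]] by (meson injD)
  have "Q \<subseteq> y ` {..<d}"
  proof
    fix w assume "w \<in> Q"
    then obtain r where "w = y r" using rng by auto
    then have "w = y (r mod d)" using funpow_mod_eq[OF yd, of r] unfolding y_def by simp
    then show "w \<in> y ` {..<d}" using pq d_def by simp
  qed
  then have "card Q \<le> card (y ` {..<d})" by (simp add: card_mono)
  also have "\<dots> \<le> d" using card_image_le[of "{..<d}" y] by simp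
  finally have "card Q \<le> d" .
  then have dQ: "d = card Q" using pq d_def by simp
  then show "(\<sigma> ^^ card Q) x = x" using yd by simp
  have "Q \<subseteq> y ` {..<card Q}" using \<open>Q \<subseteq> y ` {..<d}\<close> dQ by simp
  then show img: "(\<lambda>p. (\<sigma> ^^ p) x) ` {..<card Q} = Q" using yQ unfolding y_def by blast
  show "inj_on (\<lambda>p. (\<sigma> ^^ p) x) {..<card Q}"
    using eq_card_imp_inj_on[of "{..<card Q}" y] img unfolding y_def by simp
qed

lemma prod_pm1_eq_power_card:
  fixes e :: "'a \<Rightarrow> real"
  assumes "finite S" "\<And>q. q \<in> S \<Longrightarrow> e q = 1 \<or> e q = -1"
  shows "prod e S = (-1) ^ card {q\<in>S. e q < 0}"
proof -
  have "prod e S = (\<Prod>q\<in>S. if e q < 0 then -1 else 1)"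
    using assms(2) by (intro prod.cong refl) force
  also have "\<dots> = (-1) ^ card {q\<in>S. e q < 0}"
    using assms(1) by (simp add: prod.If_cases Int_def)
  finally show ?thesis .
qed

text \<open>A cycle \<open>Q\<close> of \<open>\<sigma>\<close> together with paths \<open>H 0 i \<rightarrow> H 1 i \<rightarrow> \<dots> \<rightarrow> H k i = \<sigma> i\<close>
  of the signed digraph, one for each \<open>i \<in> Q\<close>, traces out a cycle of length \<open>k * card Q\<close>.\<close>

locale orbit_cycle =
  fixes k :: nat and n :: "nat \<Rightarrow> nat" and A :: "nat \<Rightarrow> real mat" and H :: "nat \<Rightarrow> nat \<Rightarrow> nat"
    and \<sigma> :: "nat \<Rightarrow> nat" and I Q :: "nat set" and x :: nat
  assumes k_pos: "k > 0" and finite_I: "finite I" and perm: "\<sigma> permutes I"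
    and cycle: "perm_cycle \<sigma> I Q" and x_in: "x \<in> Q"
    and H_inj: "\<And>l. l < k \<Longrightarrow> inj_on (H l) I"
    and H_less: "\<And>l i. l < k \<Longrightarrow> i \<in> I \<Longrightarrow> H l i < n l"
    and H_0: "\<And>i. i \<in> I \<Longrightarrow> H 0 i = i"
    and H_k: "\<And>i. i \<in> I \<Longrightarrow> H k i = \<sigma> i"
    and H_edge: "\<And>l i. l < k \<Longrightarrow> i \<in> I \<Longrightarrow> A l $$ (H l i, H (Suc l) i) \<noteq> 0"
begin

abbreviation "L \<equiv> card Q"

definition orb :: "nat \<Rightarrow> nat" where "orb p = (\<sigma> ^^ p) x"

definition vertex :: "nat \<Rightarrow> nat \<times> nat" where
  "vertex q = (q mod k, H (q mod k) (orb (q div k)))"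

definition vertices :: "(nat \<times> nat) list" where
  "vertices = map vertex [0..<k * L]"

lemma orb_in_I: "orb p \<in> I"
  using perm_cycle_funpow(1)[OF finite_I perm cycle x_in] perm_cycleD(2)[OF cycle]
  unfolding orb_def by blast

lemma orb_Suc: "orb (Suc p) = \<sigma> (orb p)"
  unfolding orb_def by simp

lemma L_pos: "L > 0"
  using perm_cycleD(1,2)[OF cycle] finite_I finite_subset card_gt_0_iff by blast

lemma orb_mod: "orb (p mod L) = orb p"
  unfolding orb_def using funpow_mod_eq[OF perm_cycle_funpow(2)[OF finite_I perm cycle x_in]] .

lemma vertex_mod: "vertex (q mod (k * L)) = vertex q"
proof -
  have q: "q mod (k * L) = k * (q div k mod L) + q mod k" by (simp add: mod_mult2_eq)
  have "q mod (k * L) mod k = q mod k" "q mod (k * L) div k = q div k mod L"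
    unfolding q using k_pos by simp_all
  then show ?thesis unfolding vertex_def using orb_mod[of "q div k"] by simp
qed

lemma snd_vertex_Suc: "snd (vertex (Suc q)) = H (Suc (q mod k)) (orb (q div k))"
proof (cases "Suc (q mod k) = k")
  case True
  then have "Suc q mod k = 0" "Suc q div k = Suc (q div k)"
    using mod_Suc[of q k] div_Suc[of q k] by auto
  then show ?thesis
    unfolding vertex_def using True H_0[OF orb_in_I[of "Suc (q div k)"]] H_k[OF orb_in_I[of "q div k"]]
    by (simp add: orb_Suc)
next
  case False
  then have "Suc q mod k = Suc (q mod k)" "Suc q div k = q div k"
    using mod_Suc[of q k] div_Suc[of q k] by auto
  then show ?thesis unfolding vertex_def by simp
qed

lemma vertex_edge: "sd_edge k n A (vertex q) (vertex (Suc q))"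
  unfolding sd_edge_def sd_vertex_def
proof (intro conjI)
  show "fst (vertex (Suc q)) = (fst (vertex q) + 1) mod k"
    unfolding vertex_def by (simp add: mod_Suc_eq)
  show "A (fst (vertex q)) $$ (snd (vertex q), snd (vertex (Suc q))) \<noteq> 0"
    unfolding snd_vertex_Suc by (simp add: vertex_def H_edge k_pos orb_in_I)
qed (simp_all add: vertex_def k_pos H_less orb_in_I)

lemma inj_on_vertex: "inj_on vertex {0..<k * L}"
proof
  fix a b assume a: "a \<in> {0..<k * L}" and b: "b \<in> {0..<k * L}" and e: "vertex a = vertex b"
  then have m: "a mod k = b mod k" unfolding vertex_def by simp
  then have "orb (a div k) = orb (b div k)"
    using e H_inj[of "a mod k"] orb_in_I k_pos unfolding vertex_def by (simp add: inj_on_eq_iff)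
  moreover have "a div k < L" "b div k < L" using a b k_pos
    by (simp_all add: less_mult_imp_div_less mult.commute)
  ultimately have "a div k = b div k"
    using perm_cycle_funpow(3)[OF finite_I perm cycle x_in] unfolding orb_def
    by (meson inj_onD lessThan_iff)
  then show "a = b" using m by (metis div_mult_mod_eq)
qed

lemma vertices_nth: "i < k * L \<Longrightarrow> vertices ! i = vertex i"
  and vertices_nth_Suc: "i < k * L \<Longrightarrow> vertices ! (Suc i mod (k * L)) = vertex (Suc i)"
  unfolding vertices_def using vertex_mod[of "Suc i"] k_pos L_pos by auto

lemma length_vertices: "length vertices = k * L"
  unfolding vertices_def by simp

lemma sd_cycle_vertices: "sd_cycle k n A vertices"
  unfolding sd_cycle_def length_vertices
  using k_pos L_pos inj_on_vertex vertex_edge vertices_nth vertices_nth_Suc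
  by (auto simp: vertices_def distinct_map)

definition edge_sign :: "nat \<Rightarrow> real" where
  "edge_sign q = sd_edge_sign A (vertex q) (vertex (Suc q))"

lemma sd_neg_edges_vertices: "sd_neg_edges A vertices = card {q\<in>{..<k * L}. edge_sign q < 0}"
  unfolding sd_neg_edges_def edge_sign_def length_vertices
  by (intro arg_cong[where f=card]) (auto simp: vertices_nth vertices_nth_Suc)

lemma edge_sign_block: "l < k \<Longrightarrow> edge_sign (p * k + l) = sgn (A l $$ (H l (orb p), H (Suc l) (orb p)))"
  unfolding edge_sign_def sd_edge_sign_def snd_vertex_Suc by (simp add: vertex_def)

lemma prod_sgn_eq_neg_edges:
  "(\<Prod>i\<in>Q. \<Prod>l<k. sgn (A l $$ (H l i, H (Suc l) i))) = (-1) ^ sd_neg_edges A vertices"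
proof -
  have "edge_sign q = 1 \<or> edge_sign q = -1" for q
    using edge_sign_block[of "q mod k" "q div k"] H_edge[OF _ orb_in_I] k_pos
    by (simp add: sgn_if mult.commute)
  then have "(-1) ^ sd_neg_edges A vertices = (\<Prod>q<k * L. edge_sign q)"
    unfolding sd_neg_edges_vertices using prod_pm1_eq_power_card[of "{..<k * L}" edge_sign] by simp
  also have "\<dots> = (\<Prod>p<L. prod edge_sign {p * k..<p * k + k})"
    using prod.nat_group[of edge_sign k L] by (simp add: mult.commute)
  also have "\<dots> = (\<Prod>p<L. \<Prod>l<k. edge_sign (p * k + l))"
    using prod.shift_bounds_nat_ivl[of edge_sign 0 "_ * k" k]
    by (simp add: add.commute lessThan_atLeast0)
  also have "\<dots> = (\<Prod>p<L. \<Prod>l<k. sgn (A l $$ (H l (orb p), H (Suc l) (orb p))))"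
    by (simp add: edge_sign_block)
  also have "\<dots> = (\<Prod>i\<in>Q. \<Prod>l<k. sgn (A l $$ (H l i, H (Suc l) i)))"
    unfolding orb_def
    by (subst (2) perm_cycle_funpow(4)[OF finite_I perm cycle x_in, symmetric],
        subst prod.reindex[OF perm_cycle_funpow(3)[OF finite_I perm cycle x_in]]) simp
  finally show ?thesis ..
qed

lemma prod_sgn_if_e_cycle_free:
  assumes "e_cycle_free k n A"
  shows "(\<Prod>i\<in>Q. \<Prod>l<k. sgn (A l $$ (H l i, H (Suc l) i))) = (-1) ^ (card Q - 1)"
proof -
  have "\<not> sd_e_cycle k n A vertices" using assms unfolding e_cycle_free_def by blast
  then have "odd (L + sd_neg_edges A vertices)"
    using sd_cycle_vertices length_vertices k_pos unfolding sd_e_cycle_def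
    by (simp add: minus_one_power_iff split: if_splits)
  then have "even (sd_neg_edges A vertices) = even (L - 1)" using L_pos by presburger
  then show ?thesis unfolding prod_sgn_eq_neg_edges by (simp add: minus_one_power_iff)
qed

end

lemma add_mod_cancel_left:
  assumes "i < m" "j < m" "(c + i) mod m = (c + j) mod (m::nat)"
  shows "i = j"
proof -
  have "j' - i' = 0" if "i' \<le> j'" "j' < m" "(c + i') mod m = (c + j') mod m" for i' j'
  proof -
    have "m dvd j' - i'" using mod_eq_dvd_iff_nat[of "c + i'" "c + j'" m] that by simp
    then show ?thesis using that(2) by (metis less_imp_diff_less nat_dvd_not_less neq0_conv)
  qed
  then show ?thesis using assms by (cases "i \<le> j") (fastforce, metis le_cases diff_is_0_eq le_antisym)
qed

lemma bij_betw_add_mod: "bij_betw (\<lambda>i. (c + i) mod m) {..<m} {..<(m::nat)}"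
proof -
  have "inj_on (\<lambda>i. (c + i) mod m) {..<m}"
    by (rule inj_onI) (use add_mod_cancel_left in auto)
  moreover have "(\<lambda>i. (c + i) mod m) ` {..<m} \<subseteq> {..<m}"
    by (rule image_subsetI) simp
  ultimately show ?thesis unfolding bij_betw_def using endo_inj_surj[of "{..<m}"] by blast
qed

lemma card_add_mod: "card {i\<in>{..<m}. P ((c + i) mod m)} = card {j\<in>{..<(m::nat)}. P j}"
proof -
  let ?f = "\<lambda>i. (c + i) mod m"
  have inj: "inj_on ?f {..<m}" and img: "?f ` {..<m} = {..<m}"
    using bij_betw_add_mod[of c m] unfolding bij_betw_def by blast+
  have "?f ` {i\<in>{..<m}. P (?f i)} = {j\<in>{..<m}. P j}"
  proof
    show "{j\<in>{..<m}. P j} \<subseteq> ?f ` {i\<in>{..<m}. P (?f i)}"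
    proof
      fix j assume j: "j \<in> {j\<in>{..<m}. P j}"
      then obtain i where "i < m" "?f i = j" using img by (metis (no_types, lifting) imageE lessThan_iff mem_Collect_eq)
      then show "j \<in> ?f ` {i\<in>{..<m}. P (?f i)}" using j by force
    qed
  qed auto
  then show ?thesis using card_image[OF inj_on_subset[OF inj]] by (metis (no_types, lifting) mem_Collect_eq subsetI lessThan_iff)
qed

lemma sd_cycle_edge_mod:
  "sd_cycle k n A vs \<Longrightarrow> sd_edge k n A (vs ! (q mod length vs)) (vs ! (Suc q mod length vs))"
  unfolding sd_cycle_def by (metis length_greater_0_conv mod_Suc_eq Suc_eq_plus1 mod_less_divisor)

lemma sd_cycle_level:
  assumes "sd_cycle k n A vs"
  shows "fst (vs ! (q mod length vs)) = (fst (vs ! 0) + q) mod k"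
proof (induction q)
  case 0
  show ?case using sd_cycle_edge_mod[OF assms, of 0] unfolding sd_edge_def sd_vertex_def by simp
next
  case (Suc q)
  then show ?case
    using sd_cycle_edge_mod[OF assms, of q] unfolding sd_edge_def by (simp add: mod_Suc_eq)
qed

lemma sd_cycle_rotate:
  assumes cyc: "sd_cycle k n A vs"
  shows "sd_cycle k n A (rotate r vs)" "sd_neg_edges A (rotate r vs) = sd_neg_edges A vs"
proof -
  let ?m = "length vs"
  have m: "?m > 0" using cyc unfolding sd_cycle_def by simp
  have nth: "rotate r vs ! i = vs ! ((r + i) mod ?m)" if "i < ?m" for i
    using that nth_rotate[of i vs r] by simp
  have nth_Suc: "rotate r vs ! (Suc i mod ?m) = vs ! (Suc ((r + i) mod ?m) mod ?m)" for i
    using nth[of "Suc i mod ?m"] m by (simp add: mod_simps)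
  show "sd_cycle k n A (rotate r vs)"
    using cyc sd_cycle_edge_mod[OF cyc] m nth nth_Suc unfolding sd_cycle_def by auto
  define P where "P j \<longleftrightarrow> sd_edge_sign A (vs ! j) (vs ! (Suc j mod ?m)) < 0" for j
  have "sd_neg_edges A (rotate r vs) = card {i\<in>{..<?m}. P ((r + i) mod ?m)}"
    unfolding sd_neg_edges_def P_def by (intro arg_cong[where f=card]) (auto simp: nth nth_Suc)
  also have "\<dots> = card {j\<in>{..<?m}. P j}" by (rule card_add_mod)
  also have "\<dots> = sd_neg_edges A vs"
    unfolding sd_neg_edges_def P_def by (intro arg_cong[where f=card]) auto
  finally show "sd_neg_edges A (rotate r vs) = sd_neg_edges A vs" .
qed

lemma sd_cycle_rotate_to_level_0:
  assumes "k > 0" "sd_cycle k n A vs"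
  obtains vs' where "sd_cycle k n A vs'" "fst (vs' ! 0) = 0"
    "length vs' = length vs" "sd_neg_edges A vs' = sd_neg_edges A vs"
proof -
  define m where "m = length vs"
  have m: "m > 0" using assms(2) unfolding sd_cycle_def m_def by simp
  have "fst (vs ! 0) < k" using sd_cycle_edge_mod[OF assms(2), of 0] unfolding sd_edge_def sd_vertex_def by simp
  then have "fst (vs ! ((k - fst (vs ! 0)) mod m)) = 0"
    using sd_cycle_level[OF assms(2), of "k - fst (vs ! 0)"] unfolding m_def by simp
  then have "fst (rotate ((k - fst (vs ! 0)) mod m) vs ! 0) = 0"
    using nth_rotate[of 0 vs] m unfolding m_def by simp
  then show ?thesis using that[of "rotate ((k - fst (vs ! 0)) mod m) vs"] sd_cycle_rotate[OF assms(2)]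
    by simp
qed

text \<open>Conversely, a cycle of the signed digraph starting at level \<open>0\<close> is cut at its level-\<open>0\<close>
  vertices \<open>I\<close> into \<open>card I\<close> paths of length \<open>k\<close>, which close up into a cyclic permutation
  of \<open>I\<close>.\<close>

locale level0_cycle =
  fixes k :: nat and n :: "nat \<Rightarrow> nat" and A :: "nat \<Rightarrow> real mat" and vs :: "(nat \<times> nat) list"
  assumes k_pos: "k > 0" and cycle: "sd_cycle k n A vs" and level_0: "fst (vs ! 0) = 0"
begin

abbreviation "m \<equiv> length vs"

definition walk :: "nat \<Rightarrow> nat \<times> nat" where "walk q = vs ! (q mod m)"

lemma m_pos: "m > 0"
  using cycle unfolding sd_cycle_def by simp

lemma walk_mod: "walk (q mod m) = walk q"
  unfolding walk_def by simp

lemma walk_edge: "sd_edge k n A (walk q) (walk (Suc q))"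
  unfolding walk_def by (rule sd_cycle_edge_mod[OF cycle])

lemma fst_walk: "fst (walk q) = q mod k"
  unfolding walk_def using sd_cycle_level[OF cycle] level_0 by simp

lemma walk_vertex: "sd_vertex k n (walk q)"
  using walk_edge unfolding sd_edge_def by blast

lemma inj_on_walk: "inj_on walk {..<m}"
  using cycle unfolding walk_def sd_cycle_def by (simp add: inj_on_def nth_eq_iff_index_eq)

definition L :: nat where "L = m div k"

lemma m_eq: "m = k * L"
proof -
  have "m mod k = 0" using fst_walk[of m] fst_walk[of 0] walk_mod[of m] by simp
  then show ?thesis unfolding L_def by (metis mult_div_mod_eq add_0_right mult.commute)
qed

lemma L_pos: "L > 0"
  using m_pos m_eq by (cases L) auto

lemma block_less: "p < L \<Longrightarrow> l < k \<Longrightarrow> k * p + l < m"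
proof -
  assume "p < L" "l < k"
  then have "k * p + l < k * Suc p" by simp
  also have "\<dots> \<le> k * L" using \<open>p < L\<close> by (intro mult_le_mono2) simp
  finally show ?thesis using m_eq by simp
qed

definition start :: "nat \<Rightarrow> nat" where "start p = snd (walk (k * p))"

lemma walk_start: "walk (k * p) = (0, start p)"
  using fst_walk[of "k * p"] unfolding start_def by (metis mod_mult_self1_is_0 prod.collapse)

lemma inj_on_start: "inj_on start {..<L}"
proof
  fix a b assume a: "a \<in> {..<L}" and b: "b \<in> {..<L}" and "start a = start b"
  then have "walk (k * a) = walk (k * b)" using walk_start by simp
  moreover have "k * a \<in> {..<m}" "k * b \<in> {..<m}" using block_less[of _ 0] a b k_pos by auto
  ultimately show "a = b" using inj_on_walk k_pos by (simp add: inj_on_eq_iff)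
qed

definition I :: "nat set" where "I = start ` {..<L}"

lemma finite_I: "finite I"
  unfolding I_def by simp

lemma card_I: "card I = L"
  unfolding I_def using card_image[OF inj_on_start] by simp

lemma start_0_in_I: "start 0 \<in> I"
  unfolding I_def using L_pos by simp

lemma I_subset: "I \<subseteq> {0..<n 0}"
  using walk_vertex walk_start unfolding I_def sd_vertex_def by (auto simp: image_iff) (metis fst_conv snd_conv)

definition start_index :: "nat \<Rightarrow> nat" where "start_index = inv_into {..<L} start"

lemma start_index_start: "p < L \<Longrightarrow> start_index (start p) = p"
  unfolding start_index_def using inj_on_start by (simp add: inv_into_f_f)

lemma start_start_index: "i \<in> I \<Longrightarrow> start (start_index i) = i"
  unfolding start_index_def I_def by (simp add: f_inv_into_f)

lemma start_index_less: "i \<in> I \<Longrightarrow> start_index i < L"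
  unfolding start_index_def I_def by (metis inv_into_into lessThan_iff)

definition path :: "nat \<Rightarrow> nat \<Rightarrow> nat" where
  "path l = (\<lambda>i\<in>I. snd (walk (k * start_index i + l)))"

lemma path_walk: "i \<in> I \<Longrightarrow> path l i = snd (walk (k * start_index i + l))"
  unfolding path_def by simp

lemma walk_path: "i \<in> I \<Longrightarrow> walk (k * start_index i + l) = (l mod k, path l i)"
  using path_walk fst_walk by (simp add: prod_eq_iff)

lemma path_0: "path 0 = (\<lambda>i\<in>I. i)"
  unfolding path_def using walk_start start_start_index by (auto simp: fun_eq_iff)

lemma path_k: "i \<in> I \<Longrightarrow> path k i = start (Suc (start_index i) mod L)"
proof -
  assume i: "i \<in> I"
  have "k * Suc (start_index i) mod m = k * (Suc (start_index i) mod L)"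
    unfolding m_eq by (rule mod_mult_mult1)
  then have "walk (k * start_index i + k) = (0, start (Suc (start_index i) mod L))"
    using walk_mod[of "k * Suc (start_index i)"] walk_start by (simp add: add.commute)
  then show ?thesis using path_walk[OF i, of k] by simp
qed

lemma path_less: "i \<in> I \<Longrightarrow> path l i < n (l mod k)"
  using walk_vertex[of "k * start_index i + l"] walk_path unfolding sd_vertex_def by simp

lemma path_edge: "l < k \<Longrightarrow> i \<in> I \<Longrightarrow> A l $$ (path l i, path (Suc l) i) \<noteq> 0"
  using walk_edge[of "k * start_index i + l"] walk_path[of i l] walk_path[of i "Suc l"]
  unfolding sd_edge_def by simp

lemma inj_on_path: "l \<le> k \<Longrightarrow> inj_on (path l) I"
proof (rule inj_onI)
  fix i j assume l: "l \<le> k" and i: "i \<in> I" and j: "j \<in> I" and e: "path l i = path l j"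
  have "start_index i = start_index j"
  proof (cases "l = k")
    case True
    then have "Suc (start_index i) mod L = Suc (start_index j) mod L"
      using e path_k i j inj_on_start L_pos by (simp add: inj_on_eq_iff)
    then show ?thesis
      using add_mod_cancel_left[of "start_index i" L "start_index j" 1] start_index_less i j by simp
  next
    case False
    then have "walk (k * start_index i + l) = walk (k * start_index j + l)"
      using e walk_path i j by simp
    moreover have "k * start_index i + l < m" "k * start_index j + l < m"
      using block_less start_index_less i j l False by simp_all
    ultimately show ?thesis using inj_on_walk k_pos by (simp add: inj_on_eq_iff)
  qed
  then show "i = j" using start_start_index i j by metis
qed

definition \<sigma> :: "nat \<Rightarrow> nat" where "\<sigma> = restrict_id (path k) I"

lemma bij_betw_path_k: "bij_betw (path k) I I"
proof -
  have "path k ` I \<subseteq> I" using path_k L_pos unfolding I_def by auto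
  then show ?thesis
    using inj_on_path[of k] endo_inj_surj[OF finite_I] by (simp add: bij_betw_def)
qed

lemma permutes_\<sigma>: "\<sigma> permutes I"
  unfolding \<sigma>_def by (rule permutes_restrict_id[OF bij_betw_path_k])

lemma funpow_\<sigma>_start: "j < L \<Longrightarrow> (\<sigma> ^^ p) (start j) = start ((j + p) mod L)"
proof (induction p)
  case (Suc p)
  have "start ((j + p) mod L) \<in> I" unfolding I_def using L_pos by simp
  then show ?case
    using Suc path_k start_index_start L_pos unfolding \<sigma>_def by (simp add: mod_Suc_eq)
qed simp

lemma perm_cycle_I: "perm_cycle \<sigma> I I"
  unfolding perm_cycle_def
proof (intro conjI allI impI)
  show "I \<noteq> {}" "I \<subseteq> I" "\<sigma> ` I \<subseteq> I" using start_0_in_I permutes_image[OF permutes_\<sigma>] by auto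
  fix Q assume Q: "Q \<subseteq> I" "Q \<noteq> {}" "\<sigma> ` Q \<subseteq> Q"
  then obtain j where j: "j < L" "start j \<in> Q" unfolding I_def by auto
  have in_Q: "(\<sigma> ^^ p) (start j) \<in> Q" for p
    by (induction p) (use j Q(3) in auto)
  have "start t \<in> Q" if "t < L" for t
    using in_Q[of "t + L - j"] funpow_\<sigma>_start[OF j(1)] that j by simp
  then show "Q = I" using Q(1) unfolding I_def by auto
qed

sublocale orbit: orbit_cycle k n A path \<sigma> I I "start 0"
proof
  show "\<And>i. i \<in> I \<Longrightarrow> path k i = \<sigma> i" unfolding \<sigma>_def by simp
  show "path l i < n l" if "l < k" "i \<in> I" for l i using path_less[OF that(2), of l] that(1) by simp
qed (use k_pos finite_I permutes_\<sigma> perm_cycle_I start_0_in_I inj_on_path path_0 path_edge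
     in auto)

lemma orbit_vertices_eq: "orbit.vertices = vs"
proof -
  have orb: "orbit.orb p = start (p mod L)" for p
    unfolding orbit.orb_def using funpow_\<sigma>_start[of 0 p] L_pos by simp
  have "orbit.vertex q = walk q" for q
  proof -
    have "walk q = walk (k * (q div k mod L) + q mod k)"
      using walk_mod[of q] unfolding m_eq by (simp add: mod_mult2_eq)
    also have "\<dots> = (q mod k, path (q mod k) (start (q div k mod L)))"
    proof -
      have "start (q div k mod L) \<in> I" unfolding I_def using L_pos by simp
      then show ?thesis
        using walk_path[of "start (q div k mod L)" "q mod k"] start_index_start L_pos by simp
    qed
    finally show ?thesis unfolding orbit.vertex_def orb by simp
  qed
  then have "orbit.vertices = map walk [0..<m]"
    unfolding orbit.vertices_def card_I m_eq by simp
  also have "\<dots> = vs" unfolding walk_def by (rule nth_equalityI) auto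
  finally show ?thesis .
qed

text \<open>For an e-cycle the hypothesis of \<open>sign_mult_prod_cycles_eq_1\<close> fails by exactly
  one sign, so flipping the weight of one vertex yields \<open>-1\<close>.\<close>

lemma sign_mult_prod_sgn_e_cycle:
  assumes "(-1::int) ^ (length vs div k + sd_neg_edges A vs) = 1"
  shows "of_int (sign \<sigma>) * (\<Prod>i\<in>I. \<Prod>l<k. sgn (A l $$ (path l i, path (Suc l) i))) = -1"
proof -
  define s where "s i = (\<Prod>l<k. sgn (A l $$ (path l i, path (Suc l) i)))" for i
  have "even (L + sd_neg_edges A vs)"
    using assms unfolding L_def by (simp add: minus_one_power_iff split: if_splits)
  then have "prod s I = (-1) ^ L"
    using orbit.prod_sgn_eq_neg_edges orbit_vertices_eq unfolding s_def
    by (simp add: minus_one_power_iff)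
  define t where "t = s(start 0 := - s (start 0))"
  have "prod t I = - prod s I"
    using start_0_in_I finite_I unfolding t_def
    by (simp add: prod.remove prod.cong[of "I - {start 0}" _ "s(start 0 := - s (start 0))" s])
  moreover have "prod t Q = (-1) ^ (card Q - 1)" if "perm_cycle \<sigma> I Q" for Q
  proof -
    have "Q = I" using perm_cycleD[OF that] perm_cycleD(4)[OF perm_cycle_I] by blast
    then show ?thesis using \<open>prod t I = - prod s I\<close> \<open>prod s I = (-1) ^ L\<close> card_I L_pos
      by (cases L) auto
  qed
  ultimately show ?thesis
    using sign_mult_prod_cycles_eq_1[OF finite_I permutes_\<sigma>, of t] unfolding s_def by simp
qed

end

section \<open>Sign patterns without e-cycles\<close>

locale qual_chain =
  fixes k :: nat and n :: "nat \<Rightarrow> nat" and A B :: "nat \<Rightarrow> real mat" and I :: "nat set"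
  assumes k_pos: "k > 0"
    and A_carrier: "\<forall>j<k. A j \<in> carrier_mat (n j) (n ((j + 1) mod k))"
    and B_qual: "\<forall>j<k. B j \<in> qual_class (A j)"
    and I_subset_n: "I \<subseteq> {0..<n 0}"
begin

lemma B_carrier_n: "l < k \<Longrightarrow> B l \<in> carrier_mat (n l) (n (Suc l mod k))"
  using A_carrier B_qual unfolding qual_class_def carrier_mat_def by simp

lemma sgn_B: "l < k \<Longrightarrow> r < n l \<Longrightarrow> c < n (Suc l mod k) \<Longrightarrow> sgn (B l $$ (r, c)) = sgn (A l $$ (r, c))"
  using A_carrier B_qual unfolding qual_class_def carrier_mat_def by simp

sublocale mat_chain k "\<lambda>l. n (l mod k)" B I
  using B_carrier_n I_subset_n by unfold_locales simp_all

lemma chain_prod_carrier: "chain_prod (n 0) k B \<in> carrier_mat (n 0) (n 0)"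
  using tail_prod_carrier[of 0] unfolding chain_prod_def tail_prod_def by simp

lemma principal_minor_eq:
  "det (submatrix (chain_prod (n 0) k B) I I) =
    (\<Sum>G\<in>path_maps 0. path_weight 0 (G(0 := (\<lambda>i\<in>I. i))))"
  using principal_minor_chain_prod by simp

text \<open>A nonzero term comes from paths \<open>H\<close> all of whose steps are edges of the signed digraph; each
  cycle of the permutation \<open>H k\<close> then traces an o-cycle, and these signs cancel the sign of \<open>H k\<close>.\<close>

lemma path_weight_nonneg:
  assumes e_free: "e_cycle_free k n A"
    and H: "\<And>l. l \<le> k \<Longrightarrow> H l \<in> inj_maps I (n (l mod k))" and H_0: "\<And>i. i \<in> I \<Longrightarrow> H 0 i = i"
  shows "0 \<le> path_weight 0 H"
proof (cases "H k ` I = I \<and> (\<forall>i\<in>I. \<forall>l<k. B l $$ (H l i, H (Suc l) i) \<noteq> 0)")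
  case False
  then have "H k ` I \<noteq> I \<or> (\<Prod>i\<in>I. \<Prod>l\<in>{0..<k}. B l $$ (H l i, H (Suc l) i)) = 0"
    using finite_I by (auto simp: prod_zero_iff) (use atLeastLessThan_iff in blast)
  then show ?thesis unfolding path_weight_def by auto
next
  case True
  have H_less: "H l i < n (l mod k)" if "l \<le> k" "i \<in> I" for l i
    using H[OF that(1)] that(2) unfolding inj_maps_def by auto
  have sgn_BA: "sgn (B l $$ (H l i, H (Suc l) i)) = sgn (A l $$ (H l i, H (Suc l) i))"
    if "l < k" "i \<in> I" for l i
    using sgn_B[OF that(1)] H_less[of l i] H_less[of "Suc l" i] that by simp
  define \<sigma> where "\<sigma> = restrict_id (H k) I"
  have perm: "\<sigma> permutes I"
    unfolding \<sigma>_def using True H[of k] unfolding inj_maps_def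
    by (intro permutes_restrict_id) (simp add: bij_betw_def)
  define s where "s i = (\<Prod>l<k. sgn (A l $$ (H l i, H (Suc l) i)))" for i
  have "prod s Q = (-1) ^ (card Q - 1)" if cyc: "perm_cycle \<sigma> I Q" for Q
  proof -
    obtain x where "x \<in> Q" using perm_cycleD(1)[OF cyc] by blast
    interpret orbit_cycle k n A H \<sigma> I Q x
    proof
      show "A l $$ (H l i, H (Suc l) i) \<noteq> 0" if "l < k" "i \<in> I" for l i
        using True sgn_BA[OF that] that by (metis sgn_0_0 sgn_eq_0_iff)
      show "H l i < n l" if "l < k" "i \<in> I" for l i using H_less[of l i] that by simp
    qed (use k_pos finite_I perm cyc \<open>x \<in> Q\<close> H H_0 \<sigma>_def in
         \<open>auto simp: inj_maps_def\<close>)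
    show ?thesis unfolding s_def by (rule prod_sgn_if_e_cycle_free[OF e_free])
  qed
  then have "of_int (sign \<sigma>) * prod s I = 1"
    by (rule sign_mult_prod_cycles_eq_1[OF finite_I perm])
  moreover have "(\<Prod>i\<in>I. \<Prod>l\<in>{0..<k}. B l $$ (H l i, H (Suc l) i)) =
      prod s I * (\<Prod>i\<in>I. \<Prod>l\<in>{0..<k}. \<bar>B l $$ (H l i, H (Suc l) i)\<bar>)"
    unfolding s_def lessThan_atLeast0 prod.distrib[symmetric]
    by (intro prod.cong refl) (simp add: sgn_BA[symmetric] sgn_mult_abs)
  ultimately show ?thesis
    unfolding path_weight_def \<sigma>_def using True by (simp add: prod_nonneg mult.assoc[symmetric])
qed

end

lemma P0_matrix_if_e_cycle_free:
  assumes "k > 0" "\<forall>j<k. A j \<in> carrier_mat (n j) (n ((j + 1) mod k))"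
    and "e_cycle_free k n A" "M \<in> qual_product k n A"
  shows "P0_matrix M"
proof -
  obtain B where M: "M = chain_prod (n 0) k B" and B: "\<forall>j<k. B j \<in> qual_class (A j)"
    using assms(4) unfolding qual_product_def by blast
  have M_carrier: "M \<in> carrier_mat (n 0) (n 0)"
  proof -
    interpret qual_chain k n A B "{}" using assms(1,2) B by unfold_locales auto
    show ?thesis unfolding M by (rule chain_prod_carrier)
  qed
  have "0 \<le> det (submatrix M I I)" if "I \<subseteq> {0..<n 0}" for I
  proof -
    interpret qual_chain k n A B I using assms(1,2) B that by unfold_locales auto
    show ?thesis unfolding M principal_minor_eq
    proof (rule sum_nonneg)
      fix G assume "G \<in> path_maps 0"
      moreover have "(\<lambda>i\<in>I. i) \<in> inj_maps I (n 0)"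
        using that unfolding inj_maps_def by (auto simp: inj_on_def)
      ultimately show "0 \<le> path_weight 0 (G(0 := (\<lambda>i\<in>I. i)))"
        using path_maps_upd_0 by (intro path_weight_nonneg[OF assms(3)]) auto
    qed
  qed
  then show ?thesis using M_carrier unfolding P0_matrix_def by auto
qed

section \<open>Perturbation along an e-cycle\<close>

lemma prod_le_of_factor_le:
  fixes f :: "'a \<Rightarrow> real"
  assumes "finite S" "\<And>x. x \<in> S \<Longrightarrow> 0 \<le> f x \<and> f x \<le> 1" "a \<in> S" "f a \<le> \<epsilon>"
  shows "prod f S \<le> \<epsilon>"
proof -
  have "prod f S = f a * prod f (S - {a})" using assms(1,3) by (simp add: prod.remove)
  also have "\<dots> \<le> \<epsilon> * 1"
    using assms by (intro mult_mono prod_le_1 prod_nonneg) (auto dest: assms(2))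
  finally show ?thesis by simp
qed

locale perturbed_cycle = level0_cycle k n A vs for k n A vs +
  fixes \<epsilon> :: real
  assumes A_carrier: "\<forall>j<k. A j \<in> carrier_mat (n j) (n ((j + 1) mod k))"
    and \<epsilon>_pos: "0 < \<epsilon>" and \<epsilon>_le_1: "\<epsilon> \<le> 1"
begin

definition on_cycle :: "nat \<Rightarrow> nat \<Rightarrow> nat \<Rightarrow> bool" where
  "on_cycle l r c \<longleftrightarrow> (\<exists>i\<in>I. path l i = r \<and> path (Suc l) i = c)"

definition perturbed :: "nat \<Rightarrow> real mat" where
  "perturbed l = mat (n l) (n (Suc l mod k))
     (\<lambda>(r, c). sgn (A l $$ (r, c)) * (if on_cycle l r c then 1 else \<epsilon>))"

lemma perturbed_entry:
  "r < n l \<Longrightarrow> c < n (Suc l mod k) \<Longrightarrow>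
    perturbed l $$ (r, c) = sgn (A l $$ (r, c)) * (if on_cycle l r c then 1 else \<epsilon>)"
  unfolding perturbed_def by simp

lemma perturbed_qual_class: "j < k \<Longrightarrow> perturbed j \<in> qual_class (A j)"
  using A_carrier \<epsilon>_pos unfolding qual_class_def perturbed_def by (auto simp: sgn_mult)

sublocale qual: qual_chain k n A perturbed I
  using k_pos A_carrier perturbed_qual_class I_subset by unfold_locales auto

lemma abs_perturbed_le:
  assumes "l < k" "r < n l" "c < n (Suc l mod k)"
  shows "\<bar>perturbed l $$ (r, c)\<bar> \<le> 1" "\<not> on_cycle l r c \<Longrightarrow> \<bar>perturbed l $$ (r, c)\<bar> \<le> \<epsilon>"
  using perturbed_entry[OF assms(2,3)] \<epsilon>_pos \<epsilon>_le_1 by (auto simp: abs_mult sgn_if)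

definition cycle_paths :: "nat \<Rightarrow> nat \<Rightarrow> nat" where
  "cycle_paths = (\<lambda>l\<in>{Suc 0..k}. path l)"

lemma path_in_inj_maps: "l \<le> k \<Longrightarrow> path l \<in> inj_maps I (n (l mod k))"
  unfolding inj_maps_def using inj_on_path path_less by (auto simp: path_def)

lemma cycle_paths_in: "cycle_paths \<in> qual.path_maps 0"
  unfolding cycle_paths_def qual.path_maps_def using path_in_inj_maps by auto

lemma cycle_paths_upd_0: "l \<le> k \<Longrightarrow> (cycle_paths(0 := (\<lambda>i\<in>I. i))) l = path l"
  unfolding cycle_paths_def using path_0 by auto

lemma path_weight_cycle_paths:
  assumes "(-1::int) ^ (length vs div k + sd_neg_edges A vs) = 1"
  shows "qual.path_weight 0 (cycle_paths(0 := (\<lambda>i\<in>I. i))) = -1"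
proof -
  have "perturbed l $$ (path l i, path (Suc l) i) = sgn (A l $$ (path l i, path (Suc l) i))"
    if "l < k" "i \<in> I" for l i
  proof -
    have "on_cycle l (path l i) (path (Suc l) i)" unfolding on_cycle_def using that(2) by blast
    then show ?thesis
      using perturbed_entry path_less[OF that(2), of l] path_less[OF that(2), of "Suc l"] that(1) by simp
  qed
  then have "(\<Prod>i\<in>I. \<Prod>l\<in>{0..<k}. perturbed l $$ (path l i, path (Suc l) i)) =
      (\<Prod>i\<in>I. \<Prod>l<k. sgn (A l $$ (path l i, path (Suc l) i)))"
    unfolding lessThan_atLeast0 by (intro prod.cong refl) simp
  moreover have "path k ` I = I" using bij_betw_path_k by (simp add: bij_betw_def)
  ultimately show ?thesis
    using sign_mult_prod_sgn_e_cycle[OF assms] cycle_paths_upd_0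
    unfolding qual.path_weight_def \<sigma>_def
    by (simp add: qual.path_weight_cong[of "cycle_paths(0 := (\<lambda>i\<in>I. i))" path] del: fun_upd_apply)
qed

text \<open>Paths from the level-\<open>0\<close> vertices of the cycle that use only edges of the cycle are the
  cycle's own paths, because the cycle passes through each vertex once.\<close>

lemma follows_cycle_eq_path:
  assumes H: "\<And>l. l \<le> k \<Longrightarrow> inj_on (H l) I" and H_0: "\<And>i. i \<in> I \<Longrightarrow> H 0 i = i"
    and on: "\<And>i l. i \<in> I \<Longrightarrow> l < k \<Longrightarrow> on_cycle l (H l i) (H (Suc l) i)"
  shows "l \<le> k \<Longrightarrow> i \<in> I \<Longrightarrow> H l i = path l i"
proof (induction l arbitrary: i)
  case 0
  then show ?case using H_0 path_0 by simp
next
  case (Suc l)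
  obtain i' where i': "i' \<in> I" "path l i' = H l i" "path (Suc l) i' = H (Suc l) i"
    using on[OF Suc.prems(2), of l] Suc.prems(1) unfolding on_cycle_def by auto
  have "path l i' = path l i" using i'(2) Suc by simp
  then have "i' = i" using inj_on_path[of l] Suc.prems i'(1) by (simp add: inj_on_eq_iff)
  then show ?case using i'(3) by simp
qed

lemma path_maps_upd_0_in:
  "G \<in> qual.path_maps 0 \<Longrightarrow> l \<le> k \<Longrightarrow> (G(0 := (\<lambda>i\<in>I. i))) l \<in> inj_maps I (n (l mod k))"
  using qual.path_maps_upd_0[of G "\<lambda>i\<in>I. i" l] path_in_inj_maps[of 0] path_0 by simp

lemma eq_cycle_paths_if_on_cycle:
  assumes G: "G \<in> qual.path_maps 0"
    and on: "\<And>i l. i \<in> I \<Longrightarrow> l < k \<Longrightarrow>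
      on_cycle l ((G(0 := (\<lambda>i\<in>I. i))) l i) ((G(0 := (\<lambda>i\<in>I. i))) (Suc l) i)"
  shows "G = cycle_paths"
proof
  fix l
  show "G l = cycle_paths l"
  proof (cases "l \<in> {Suc 0..k}")
    case True
    have "G l \<in> I \<rightarrow>\<^sub>E {0..<n (l mod k)}" "path l \<in> I \<rightarrow>\<^sub>E {0..<n (l mod k)}"
      using G path_in_inj_maps True unfolding qual.path_maps_def inj_maps_def by auto
    moreover have "G l i = path l i" if "i \<in> I" for i
    proof -
      have "(G(0 := (\<lambda>i\<in>I. i))) l i = path l i"
        by (rule follows_cycle_eq_path[where H = "G(0 := (\<lambda>i\<in>I. i))", OF _ _ on])
          (use path_maps_upd_0_in[OF G] True that in \<open>auto simp: inj_maps_def\<close>)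
      then show ?thesis using True by simp
    qed
    ultimately have "G l = path l" by (rule PiE_ext)
    then show ?thesis using True unfolding cycle_paths_def by (simp only: restrict_apply')
  next
    case False
    then show ?thesis
      using PiE_arb[OF G[unfolded qual.path_maps_def] False] unfolding cycle_paths_def by auto
  qed
qed

lemma path_weight_le_\<epsilon>:
  assumes G: "G \<in> qual.path_maps 0" "G \<noteq> cycle_paths"
  shows "qual.path_weight 0 (G(0 := (\<lambda>i\<in>I. i))) \<le> \<epsilon>"
proof -
  define H where "H = G(0 := (\<lambda>i\<in>I. i))"
  have H_less: "H l i < n (l mod k)" if "l \<le> k" "i \<in> I" for l i
    using path_maps_upd_0_in[OF G(1) that(1)] that(2) unfolding H_def inj_maps_def by (auto simp: Pi_iff)
  have abs_le: "\<bar>perturbed l $$ (H l i, H (Suc l) i)\<bar> \<le> 1"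
    "\<not> on_cycle l (H l i) (H (Suc l) i) \<Longrightarrow> \<bar>perturbed l $$ (H l i, H (Suc l) i)\<bar> \<le> \<epsilon>"
    if "l < k" "i \<in> I" for l i
    using abs_perturbed_le[OF that(1)] H_less[of l i] H_less[of "Suc l" i] that by simp_all
  have "\<exists>i\<in>I. \<exists>l<k. \<not> on_cycle l (H l i) (H (Suc l) i)"
    using eq_cycle_paths_if_on_cycle[OF G(1)] G(2) unfolding H_def by blast
  then obtain i0 l0 where off: "i0 \<in> I" "l0 < k" "\<not> on_cycle l0 (H l0 i0) (H (Suc l0) i0)"
    by blast
  have "\<bar>\<Prod>i\<in>I. \<Prod>l\<in>{0..<k}. perturbed l $$ (H l i, H (Suc l) i)\<bar> \<le> \<epsilon>"
    unfolding abs_prod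
  proof (rule prod_le_of_factor_le[OF finite_I _ off(1)])
    show "(\<Prod>l\<in>{0..<k}. \<bar>perturbed l $$ (H l i0, H (Suc l) i0)\<bar>) \<le> \<epsilon>"
      by (rule prod_le_of_factor_le[where a=l0]) (use abs_le off in auto)
  qed (use abs_le in \<open>auto intro!: prod_nonneg prod_le_1\<close>)
  moreover have "\<bar>if H k ` I = I then of_int (sign (restrict_id (H k) I)) else 0\<bar> \<le> (1::real)"
    by (simp add: sign_def)
  ultimately have "\<bar>qual.path_weight 0 H\<bar> \<le> 1 * \<epsilon>"
    unfolding qual.path_weight_def abs_mult by (intro mult_mono) auto
  then show ?thesis unfolding H_def by simp
qed

lemma principal_minor_perturbed_le:
  assumes "(-1::int) ^ (length vs div k + sd_neg_edges A vs) = 1"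
  shows "det (submatrix (chain_prod (n 0) k perturbed) I I) \<le> -1 + real (card (qual.path_maps 0)) * \<epsilon>"
proof -
  have fin: "finite (qual.path_maps 0)"
    unfolding qual.path_maps_def by (intro finite_PiE finite_inj_maps finite_I) auto
  have "(\<Sum>G\<in>qual.path_maps 0 - {cycle_paths}. qual.path_weight 0 (G(0 := (\<lambda>i\<in>I. i))))
      \<le> real (card (qual.path_maps 0 - {cycle_paths})) * \<epsilon>"
    by (rule sum_bounded_above) (use path_weight_le_\<epsilon> in auto)
  also have "\<dots> \<le> real (card (qual.path_maps 0)) * \<epsilon>"
    using fin \<epsilon>_pos by (intro mult_right_mono) (auto simp: card_mono)
  finally show ?thesis
    unfolding qual.principal_minor_eq
    using sum.remove[OF fin cycle_paths_in, of "\<lambda>G. qual.path_weight 0 (G(0 := (\<lambda>i\<in>I. i)))"]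
      path_weight_cycle_paths[OF assms] by linarith
qed

end

lemma not_P0_matrix_if_e_cycle:
  assumes k: "k > 0" and A: "\<forall>j<k. A j \<in> carrier_mat (n j) (n ((j + 1) mod k))"
    and e_cycle: "sd_e_cycle k n A vs0"
  shows "\<exists>M \<in> qual_product k n A. \<not> P0_matrix M"
proof -
  obtain vs where cyc: "sd_cycle k n A vs" "fst (vs ! 0) = 0"
    and parity: "(-1::int) ^ (length vs div k + sd_neg_edges A vs) = 1"
    using sd_cycle_rotate_to_level_0[OF k, of n A vs0] e_cycle unfolding sd_e_cycle_def by metis
  interpret level0_cycle k n A vs using k cyc by unfold_locales
  define C where "C = PiE {Suc 0..k} (\<lambda>l. inj_maps I (n (l mod k)))"
  define \<epsilon> where "\<epsilon> = 1 / (real (card C) + 1)"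
  have \<epsilon>: "0 < \<epsilon>" "\<epsilon> \<le> 1" "real (card C) * \<epsilon> < 1" unfolding \<epsilon>_def by (auto simp: field_simps)
  interpret perturbed_cycle k n A vs \<epsilon> using A \<epsilon> by unfold_locales auto
  have "qual.path_maps 0 = C" unfolding qual.path_maps_def C_def by simp
  then have "det (submatrix (chain_prod (n 0) k perturbed) I I) < 0"
    using principal_minor_perturbed_le[OF parity] \<epsilon>(3) by simp
  moreover have "chain_prod (n 0) k perturbed \<in> qual_product k n A"
    unfolding qual_product_def using perturbed_qual_class by blast
  moreover have "\<not> P0_matrix M" if "det (submatrix M I I) < 0" "M \<in> carrier_mat (n 0) (n 0)" for M
  proof
    assume "P0_matrix M"
    moreover have "I \<subseteq> {0..<dim_row M}" "I \<noteq> {}" using that(2) I_subset start_0_in_I by auto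
    ultimately have "0 \<le> det (submatrix M I I)" unfolding P0_matrix_def by blast
    then show False using that(1) by simp
  qed
  ultimately show ?thesis using qual.chain_prod_carrier by blast
qed

theorem theorem2:
  fixes k :: nat and n :: "nat \<Rightarrow> nat" and A :: "nat \<Rightarrow> real mat"
  assumes "k > 0"
    and "\<forall>j<k. n j > 0"
    and "\<forall>j<k. A j \<in> carrier_mat (n j) (n ((j + 1) mod k))"
  shows "(\<forall>M \<in> qual_product k n A. P0_matrix M) \<longleftrightarrow> e_cycle_free k n A"
proof
  assume "\<forall>M \<in> qual_product k n A. P0_matrix M"
  then show "e_cycle_free k n A"
    using not_P0_matrix_if_e_cycle[OF assms(1,3)] unfolding e_cycle_free_def by blast
next
  assume "e_cycle_free k n A"
  then show "\<forall>M \<in> qual_product k n A. P0_matrix M"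
    using P0_matrix_if_e_cycle_free[OF assms(1,3)] by blast
qed

end
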